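(* Let $n\ge3$, $\rho\in[0,1]$, $\alpha\in[0,\tfrac{\pi}{2}]$ and $x\in(-1,1)$. Then $$\int_{-\sqrt{1-x^2}}^{\sqrt{1-x^2}} \frac{(1-x^2-y^2)^{\frac{n}{2}-2}}{(1-2\rho x \cos \alpha - 2 \rho y \sin\alpha + \rho^2)^{\frac{n}{2}-1}}\, dy =\mathrm{B}\big(\tfrac12,\tfrac{n}{2}-1\big) \frac{(1-x^2)^{\frac{n-3}{2}}}{(1+\rho^2-2\rho x \cos\alpha)^{\frac{n}{2}-1}}\, {}_2F_1\Big(\tfrac{n-2}{4},\tfrac{n}{4};\tfrac{n-1}{2};\tfrac{4\rho^2 \sin^2\alpha\, (1-x^2)}{(1+\rho^2-2\rho x \cos\alpha)^{2}}\Big).$$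
   Context: $\mathrm{B}$ is the Euler Beta function and ${}_2F_1$ the Gauss hypergeometric function. *)

theory Defs
  imports "HOL-Analysis.Analysis"
begin

text \<open>For parameters a,b,c > 0 and z >= 0 all terms
  are nonnegative, and we take the sum in the extended nonnegative reals, so that the
  value is +infinity exactly when the series diverges.\<close>
definition hyp2F1 :: "real \<Rightarrow> real \<Rightarrow> real \<Rightarrow> real \<Rightarrow> ennreal" where
  "hyp2F1 a b c z =
     (\<Sum>k. ennreal (pochhammer a k * pochhammer b k / (pochhammer c k * fact k) * z ^ k))"

end

(* With r = sqrt (1 - x^2), A = 1 + rho^2 - 2 rho x cos alpha and b = 2 rho sin alpha the
   integrand is (r^2 - y^2)^m / (A - b y)^s.  Folding [-r, r] onto [0, r] adds the reflected
   kernel (A + b y)^(-s), so only the even powers (b y / A)^(2j) of the binomial series survive.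
   Each monomial y^(2j) integrates against (r^2 - y^2)^m to a Beta value B(j + 1/2, m + 1)
   (substitute t = y^2 / r^2), and Legendre duplication for the Pochhammer symbol turns
   (s)_(2j) / (2j)! * B(j + 1/2, m + 1) into B(1/2, m + 1) times the j-th coefficient of
   2F1(s/2, s/2 + 1/2; m + 3/2).  All terms are nonnegative, so monotone convergence justifies
   the termwise integration, also when the hypergeometric series diverges. *)

theory Submission
  imports Defs
begin

lemma Beta_shift_mult_pochhammer:
  fixes a b :: real and j :: nat
  assumes "a > 0"
  shows "Beta (a + real j) b * pochhammer (a + b) j = Beta a b * pochhammer a j"
proof (induction j)
  case 0
  then show ?case by simp
next
  case (Suc j)
  have "a + real j \<notin> \<int>\<^sub>\<le>\<^sub>0"
    using assms nonpos_Ints_nonpos by fastforce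
  then have step: "(a + real j + b) * Beta (a + real j + 1) b = (a + real j) * Beta (a + real j) b"
    by (rule Beta_plus1_left)
  have "Beta (a + real (Suc j)) b * pochhammer (a + b) (Suc j)
      = ((a + real j + b) * Beta (a + real j + 1) b) * pochhammer (a + b) j"
    by (simp add: pochhammer_rec' algebra_simps)
  also have "\<dots> = (a + real j) * (Beta (a + real j) b * pochhammer (a + b) j)"
    by (simp add: step)
  also have "\<dots> = Beta a b * pochhammer a (Suc j)"
    unfolding Suc.IH by (simp add: pochhammer_rec' algebra_simps)
  finally show ?case .
qed

lemma pochhammer_double_div_fact_mult_Beta:
  fixes s b :: real
  assumes "b > 0"
  shows "pochhammer s (2*j) / fact (2*j) * Beta (real j + 1/2) b
       = Beta (1/2) b * (pochhammer (s/2) j * pochhammer (s/2 + 1/2) j / (pochhammer (b + 1/2) j * fact j))"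
proof -
  have half: "pochhammer (1/2::real) j > 0" and shift: "pochhammer (b + 1/2) j > 0"
    using assms by (auto intro: pochhammer_pos)
  have "pochhammer s (2*j) = 2^(2*j) * pochhammer (s/2) j * pochhammer (s/2 + 1/2) j"
    using pochhammer_double[of "s/2" j] by simp
  moreover have "Beta (real j + 1/2) b = Beta (1/2) b * pochhammer (1/2) j / pochhammer (b + 1/2) j"
    using Beta_shift_mult_pochhammer[where a = "1/2" and b = b and j = j] shift by (simp add: field_simps)
  moreover have "fact (2*j) = (2^(2*j) * pochhammer (1/2) j * fact j :: real)"
    by (rule fact_double)
  ultimately show ?thesis
    using half shift by (simp add: field_simps)
qed

lemma sums_even_binomial_series:
  fixes s t :: real
  assumes "\<bar>t\<bar> < 1"
  shows "(\<lambda>j. 2 * (pochhammer s (2*j) / fact (2*j)) * t^(2*j)) sums ((1 - t) powr (-s) + (1 + t) powr (-s))"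
proof -
  define h where "h k = ((-s) gchoose k) * (-t)^k + ((-s) gchoose k) * t^k" for k
  have "h sums ((1 + (-t)) powr (-s) + (1 + t) powr (-s))"
    unfolding h_def using assms by (intro sums_add gen_binomial_real) auto
  from sums_group[OF this, of 2]
  have "(\<lambda>j. sum h {j*2..<j*2+2}) sums ((1 - t) powr (-s) + (1 + t) powr (-s))" by simp
  moreover have "sum h {j*2..<j*2+2} = 2 * (pochhammer s (2*j) / fact (2*j)) * t^(2*j)" for j
  proof -
    have "{j*2..<j*2+2} = {2*j, Suc (2*j)}" by auto
    then show ?thesis
      by (simp add: h_def gbinomial_pochhammer power_mult)
  qed
  ultimately show ?thesis by simp
qed

lemma sums_even_part_powr:
  fixes A b s y :: real
  assumes "A > 0" and "\<bar>b * y\<bar> < A"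
  shows "(\<lambda>j. A powr (-s) * (2 * (pochhammer s (2*j) / fact (2*j)) * (b / A)^(2*j)) * y^(2*j))
           sums ((A - b * y) powr (-s) + (A + b * y) powr (-s))"
proof -
  have t: "\<bar>b / A * y\<bar> < 1"
    using assms by (simp add: abs_mult field_simps)
  have "1 - b / A * y > 0" "1 + b / A * y > 0"
    using t by linarith+
  then have "(A * (1 - b / A * y)) powr (-s) = A powr (-s) * (1 - b / A * y) powr (-s)"
    "(A * (1 + b / A * y)) powr (-s) = A powr (-s) * (1 + b / A * y) powr (-s)"
    using assms by (simp_all add: powr_mult)
  moreover have "A * (1 - b / A * y) = A - b * y" "A * (1 + b / A * y) = A + b * y"
    using assms by (simp_all add: field_simps)
  ultimately have sum_eq: "(A - b * y) powr (-s) + (A + b * y) powr (-s)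
      = A powr (-s) * ((1 - b / A * y) powr (-s) + (1 + b / A * y) powr (-s))"
    by (simp add: distrib_left)
  have terms_eq: "(\<lambda>j. A powr (-s) * (2 * (pochhammer s (2*j) / fact (2*j)) * (b / A * y)^(2*j)))
      = (\<lambda>j. A powr (-s) * (2 * (pochhammer s (2*j) / fact (2*j)) * (b / A)^(2*j)) * y^(2*j))"
    by (simp only: power_mult_distrib mult.assoc)
  have "(\<lambda>j. A powr (-s) * (2 * (pochhammer s (2*j) / fact (2*j)) * (b / A * y)^(2*j)))
      sums (A powr (-s) * ((1 - b / A * y) powr (-s) + (1 + b / A * y) powr (-s)))"
    by (intro sums_mult sums_even_binomial_series t)
  then show ?thesis
    unfolding terms_eq sum_eq .
qed

lemma nn_integral_Icc_symmetric:
  fixes h :: "real \<Rightarrow> ennreal" and r :: real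
  assumes [measurable]: "h \<in> borel_measurable borel"
  shows "(\<integral>\<^sup>+y\<in>{-r..r}. h y \<partial>lborel) = (\<integral>\<^sup>+y. (h y + h (-y)) * indicator {0..r} y \<partial>lborel)"
proof -
  have "(\<integral>\<^sup>+y\<in>{-r..r}. h y \<partial>lborel)
      = (\<integral>\<^sup>+y. h y * indicator {-r..<0} y + h y * indicator {0..r} y \<partial>lborel)"
    by (intro nn_integral_cong) (auto simp: indicator_def)
  also have "\<dots> = (\<integral>\<^sup>+y. h y * indicator {-r..<0} y \<partial>lborel) + (\<integral>\<^sup>+y. h y * indicator {0..r} y \<partial>lborel)"
    by (rule nn_integral_add) auto
  also have "(\<integral>\<^sup>+y. h y * indicator {-r..<0} y \<partial>lborel)
      = (\<integral>\<^sup>+y. h (-y) * indicator {-r..<0} (-y) \<partial>lborel)"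
    by (subst lborel_distr_uminus[symmetric], subst nn_integral_distr) auto
  also have "\<dots> = (\<integral>\<^sup>+y. h (-y) * indicator {0..r} y \<partial>lborel)"
    by (intro nn_integral_cong_AE eventually_mono[OF AE_lborel_singleton[of 0]])
      (auto simp: indicator_def)
  also have "\<dots> + (\<integral>\<^sup>+y. h y * indicator {0..r} y \<partial>lborel)
      = (\<integral>\<^sup>+y. (h y + h (-y)) * indicator {0..r} y \<partial>lborel)"
    by (subst nn_integral_add[symmetric]) (auto simp: algebra_simps intro!: nn_integral_cong)
  finally show ?thesis .
qed

lemma Beta_substitution_integrand_eq:
  fixes r m y :: real and j :: nat
  assumes "0 < y" and "y \<le> r"
  shows "r powr (2*m + 2*j + 1) / 2 * ((y\<^sup>2 / r\<^sup>2) powr (real j + 1/2 - 1) * (1 - y\<^sup>2 / r\<^sup>2) powr m)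
           * (2 * y / r\<^sup>2)
         = (r\<^sup>2 - y\<^sup>2) powr m * y^(2*j)"
proof -
  have r: "r > 0" using assms by linarith
  have sq_powr: "(z\<^sup>2) powr e = z powr (2 * e)" if "z > 0" for z e :: real
  proof -
    have "(z\<^sup>2) powr e = (z powr 2) powr e" using that by simp
    also have "\<dots> = z powr (2 * e)" by (simp add: powr_powr)
    finally show ?thesis .
  qed
  have ratio_powr: "(y\<^sup>2 / r\<^sup>2) powr (real j + 1/2 - 1) = y powr (2 * real j - 1) / r powr (2 * real j - 1)"
    using r assms(1) by (simp add: powr_divide sq_powr algebra_simps)
  have complement_powr: "(1 - y\<^sup>2 / r\<^sup>2) powr m = (r\<^sup>2 - y\<^sup>2) powr m / r powr (2*m)"
  proof -
    have "1 - y\<^sup>2 / r\<^sup>2 = (r\<^sup>2 - y\<^sup>2) / r\<^sup>2" using r by (simp add: field_simps)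
    moreover have "r\<^sup>2 - y\<^sup>2 \<ge> 0" using assms by (simp add: abs_le_square_iff)
    ultimately show ?thesis using r by (simp add: powr_divide sq_powr)
  qed
  have "r powr (2*m + 2*j + 1) = r powr ((2 * real j - 1) + 2*m + 2)"
    by (simp add: algebra_simps)
  also have "\<dots> = r powr (2 * real j - 1) * r powr (2*m) * r\<^sup>2"
    using r by (simp only: powr_add powr_numeral)
  finally have r_powr: "r powr (2*m + 2*j + 1) = r powr (2 * real j - 1) * r powr (2*m) * r\<^sup>2" .
  have y_powr: "y powr (2 * real j - 1) * y = y^(2*j)"
    using assms(1) powr_realpow[of y "2*j"] by (simp add: powr_diff)
  show ?thesis
    unfolding ratio_powr complement_powr r_powr using r y_powr by (simp add: field_simps)
qed

lemma nn_integral_even_moment_Beta: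
  fixes r m :: real and j :: nat
  assumes r: "r > 0" and m: "m > -1"
  shows "(\<integral>\<^sup>+y. ennreal ((r\<^sup>2 - y\<^sup>2) powr m * y^(2*j) * indicator {0..r} y) \<partial>lborel)
       = ennreal (r powr (2*m + 2*j + 1) * Beta (real j + 1/2) (m + 1) / 2)"
proof -
  define C where "C = r powr (2*m + 2*j + 1)"
  define f where "f t = C / 2 * (t powr (real j + 1/2 - 1) * (1 - t) powr m)" for t
  have "(f has_integral C / 2 * Beta (real j + 1/2) (m + 1)) {0..1}"
    unfolding f_def using has_integral_Beta_real[of "real j + 1/2" "m + 1"] m
    by (intro has_integral_mult_right) simp
  then have "integral\<^sup>N lborel (\<lambda>t. indicator {0..1} t * f t) = ennreal (C / 2 * Beta (real j + 1/2) (m + 1))"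
    by (rule nn_integral_has_integral_lebesgue[rotated]) (simp add: f_def C_def)
  then have beta: "(\<integral>\<^sup>+t. ennreal (f t * indicator {0..1} t) \<partial>lborel) = ennreal (C / 2 * Beta (real j + 1/2) (m + 1))"
    by (simp add: mult.commute)
  have deriv: "((\<lambda>y. y\<^sup>2 / r\<^sup>2) has_real_derivative 2 * y / r\<^sup>2) (at y)" for y
    by (rule DERIV_cdivide) (auto intro!: derivative_eq_intros)
  have substituted: "f (y\<^sup>2 / r\<^sup>2) * (2 * y / r\<^sup>2) = (r\<^sup>2 - y\<^sup>2) powr m * y^(2*j)"
    if "0 < y" "y \<le> r" for y
    unfolding f_def C_def by (rule Beta_substitution_integrand_eq[OF that])
  have "(\<integral>\<^sup>+t. ennreal (f t * indicator {(\<lambda>y. y\<^sup>2 / r\<^sup>2) 0..(\<lambda>y. y\<^sup>2 / r\<^sup>2) r} t) \<partial>lborel)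
      = (\<integral>\<^sup>+y. ennreal (f (y\<^sup>2 / r\<^sup>2) * (2 * y / r\<^sup>2) * indicator {0..r} y) \<partial>lborel)"
    using r by (intro nn_integral_substitution deriv) (auto simp: f_def set_borel_measurable_def intro!: continuous_intros)
  also have "\<dots> = (\<integral>\<^sup>+y. ennreal ((r\<^sup>2 - y\<^sup>2) powr m * y^(2*j) * indicator {0..r} y) \<partial>lborel)"
    by (intro nn_integral_cong_AE eventually_mono[OF AE_lborel_singleton[of 0]])
      (auto split: split_indicator simp: substituted simp del: times_divide_eq_right)
  finally show ?thesis
    using r beta by (simp add: C_def)
qed

lemma even_moment_coefficient_eq:
  fixes A b r m s :: real and j :: nat
  assumes "r > 0" and "m > -1"
  shows "A powr (-s) * (2 * (pochhammer s (2*j) / fact (2*j)) * (b / A)^(2*j))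
           * (r powr (2*m + 2*j + 1) * Beta (real j + 1/2) (m + 1) / 2)
         = Beta (1/2) (m + 1) * r powr (2*m + 1) / A powr s
           * (pochhammer (s/2) j * pochhammer (s/2 + 1/2) j / (pochhammer (m + 3/2) j * fact j)
              * ((b * r / A)\<^sup>2)^j)"
proof -
  have "r powr (2*m + 2*j + 1) = r powr ((2*m + 1) + real (2*j))"
    by (simp add: algebra_simps)
  also have "\<dots> = r powr (2*m + 1) * r^(2*j)"
    using assms(1) by (simp only: powr_add powr_realpow)
  finally have r_powr: "r powr (2*m + 2*j + 1) = r powr (2*m + 1) * r^(2*j)" .
  have coeff: "pochhammer s (2*j) / fact (2*j) * Beta (real j + 1/2) (m + 1)
      = Beta (1/2) (m + 1) * (pochhammer (s/2) j * pochhammer (s/2 + 1/2) j / (pochhammer (m + 3/2) j * fact j))"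
    using pochhammer_double_div_fact_mult_Beta[of "m + 1" s j] assms(2) by (simp add: add.assoc)
  have power: "((b * r / A)\<^sup>2)^j = (b / A)^(2*j) * r^(2*j)"
    unfolding times_divide_eq_left[symmetric] power_mult[symmetric] by (rule power_mult_distrib)
  have "A powr (-s) * (2 * (pochhammer s (2*j) / fact (2*j)) * (b / A)^(2*j))
           * (r powr (2*m + 2*j + 1) * Beta (real j + 1/2) (m + 1) / 2)
      = A powr (-s) * (b / A)^(2*j) * r powr (2*m + 1) * r^(2*j)
          * (pochhammer s (2*j) / fact (2*j) * Beta (real j + 1/2) (m + 1))"
    unfolding r_powr by simp
  also have "\<dots> = Beta (1/2) (m + 1) * r powr (2*m + 1) * A powr (-s)
      * (pochhammer (s/2) j * pochhammer (s/2 + 1/2) j / (pochhammer (m + 3/2) j * fact j)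
         * ((b / A)^(2*j) * r^(2*j)))"
    unfolding coeff by (simp only: mult_ac)
  also have "\<dots> = Beta (1/2) (m + 1) * r powr (2*m + 1) / A powr s
      * (pochhammer (s/2) j * pochhammer (s/2 + 1/2) j / (pochhammer (m + 3/2) j * fact j)
         * ((b * r / A)\<^sup>2)^j)"
    unfolding power powr_minus by (simp only: divide_inverse mult_ac)
  finally show ?thesis .
qed

lemma nn_integral_even_term_eq:
  fixes A b r m s :: real and j :: nat
  assumes r: "r > 0" and m: "m > -1" and s: "s > 0"
  shows "(\<integral>\<^sup>+y. ennreal (A powr (-s) * (2 * (pochhammer s (2*j) / fact (2*j)) * (b / A)^(2*j))
              * ((r\<^sup>2 - y\<^sup>2) powr m * y^(2*j) * indicator {0..r} y)) \<partial>lborel)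
       = ennreal (Beta (1/2) (m + 1) * r powr (2*m + 1) / A powr s
           * (pochhammer (s/2) j * pochhammer (s/2 + 1/2) j / (pochhammer (m + 3/2) j * fact j)
              * ((b * r / A)\<^sup>2)^j))"
proof -
  define c where "c = A powr (-s) * (2 * (pochhammer s (2*j) / fact (2*j)) * (b / A)^(2*j))"
  have c: "c \<ge> 0"
    using pochhammer_pos[OF s, of "2*j"] by (simp add: c_def zero_le_even_power)
  have "(\<integral>\<^sup>+y. ennreal (c * ((r\<^sup>2 - y\<^sup>2) powr m * y^(2*j) * indicator {0..r} y)) \<partial>lborel)
      = ennreal c * (\<integral>\<^sup>+y. ennreal ((r\<^sup>2 - y\<^sup>2) powr m * y^(2*j) * indicator {0..r} y) \<partial>lborel)"
    using c by (subst nn_integral_cmult[symmetric]) (auto simp: ennreal_mult)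
  also have "\<dots> = ennreal c * ennreal (r powr (2*m + 2*j + 1) * Beta (real j + 1/2) (m + 1) / 2)"
    by (simp only: nn_integral_even_moment_Beta[OF r m])
  also have "\<dots> = ennreal (c * (r powr (2*m + 2*j + 1) * Beta (real j + 1/2) (m + 1) / 2))"
    by (rule ennreal_mult'[symmetric]) (rule c)
  finally show ?thesis
    unfolding c_def even_moment_coefficient_eq[OF r m] .
qed

lemma nn_integral_Icc_powr_div_powr_hyp2F1:
  fixes r m s A b :: real
  assumes r: "r > 0" and m: "m > -1" and s: "s > 0"
    and A: "A > 0" and b: "b \<ge> 0" and bA: "b * r \<le> A"
  shows "(\<integral>\<^sup>+y\<in>{-r..r}. ennreal ((r\<^sup>2 - y\<^sup>2) powr m / (A - b * y) powr s) \<partial>lborel)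
       = ennreal (Beta (1/2) (m + 1) * r powr (2*m + 1) / A powr s)
         * hyp2F1 (s/2) (s/2 + 1/2) (m + 3/2) ((b * r / A)\<^sup>2)"
proof -
  define c where "c j = A powr (-s) * (2 * (pochhammer s (2*j) / fact (2*j)) * (b / A)^(2*j))" for j
  define T where "T j y = c j * ((r\<^sup>2 - y\<^sup>2) powr m * y^(2*j) * indicator {0..r} y)" for j y
  define G where "G y = (r\<^sup>2 - y\<^sup>2) powr m / (A - b * y) powr s" for y
  define \<kappa> where "\<kappa> = Beta (1/2) (m + 1) * r powr (2*m + 1) / A powr s"
  have c_nonneg: "c j \<ge> 0" for j
    using s b pochhammer_pos[OF s, of "2*j"] by (simp add: c_def)
  have \<kappa>_nonneg: "\<kappa> \<ge> 0"
    using m by (simp add: \<kappa>_def Beta_def Gamma_real_pos less_imp_le)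
  \<comment> \<open>The point y = r is excluded: there A - b y may vanish (when b r = A).\<close>
  have series: "(\<Sum>j. ennreal (T j y)) = (ennreal (G y) + ennreal (G (-y))) * indicator {0..r} y"
    if "y \<noteq> r" for y
  proof (cases "y \<in> {0..r}")
    case True
    with that have y: "0 \<le> y" "y < r" by auto
    have "\<bar>b * y\<bar> < A"
    proof (cases "b = 0")
      case False
      then have "b * y < b * r" using y b by (intro mult_strict_left_mono) auto
      then show ?thesis using y b bA by simp
    qed (simp add: A)
    then have "(\<lambda>j. (r\<^sup>2 - y\<^sup>2) powr m * (c j * y^(2*j)))
        sums ((r\<^sup>2 - y\<^sup>2) powr m * ((A - b * y) powr (-s) + (A + b * y) powr (-s)))"
      unfolding c_def by (intro sums_mult sums_even_part_powr A)
    moreover have "(r\<^sup>2 - y\<^sup>2) powr m * ((A - b * y) powr (-s) + (A + b * y) powr (-s)) = G y + G (-y)"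
      by (simp add: G_def powr_minus_divide distrib_left)
    ultimately have "(\<lambda>j. T j y) sums (G y + G (-y))"
      using True by (simp add: T_def mult_ac)
    then have "(\<Sum>j. ennreal (T j y)) = ennreal (G y + G (-y))"
      by (rule suminf_ennreal_eq[rotated]) (use y c_nonneg in \<open>simp add: T_def\<close>)
    then show ?thesis
      using True by (simp add: G_def ennreal_plus)
  qed (simp add: T_def)
  have term_integral: "(\<integral>\<^sup>+y. ennreal (T j y) \<partial>lborel)
      = ennreal (\<kappa> * (pochhammer (s/2) j * pochhammer (s/2 + 1/2) j / (pochhammer (m + 3/2) j * fact j)
                   * ((b * r / A)\<^sup>2)^j))" for j
    unfolding T_def c_def \<kappa>_def using r m s by (rule nn_integral_even_term_eq)
  have "(\<integral>\<^sup>+y\<in>{-r..r}. ennreal (G y) \<partial>lborel)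
      = (\<integral>\<^sup>+y. (ennreal (G y) + ennreal (G (-y))) * indicator {0..r} y \<partial>lborel)"
    by (rule nn_integral_Icc_symmetric) (simp add: G_def)
  also have "\<dots> = (\<integral>\<^sup>+y. (\<Sum>j. ennreal (T j y)) \<partial>lborel)"
    by (intro nn_integral_cong_AE eventually_mono[OF AE_lborel_singleton[of r]]) (simp add: series)
  also have "\<dots> = (\<Sum>j. \<integral>\<^sup>+y. ennreal (T j y) \<partial>lborel)"
    by (rule nn_integral_suminf) (simp add: T_def)
  also have "\<dots> = ennreal \<kappa> * hyp2F1 (s/2) (s/2 + 1/2) (m + 3/2) ((b * r / A)\<^sup>2)"
    unfolding term_integral hyp2F1_def ennreal_suminf_cmult[symmetric]
    by (intro suminf_cong ennreal_mult' \<kappa>_nonneg)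
  finally show ?thesis
    by (simp add: G_def \<kappa>_def)
qed

lemma sqrt_powr:
  fixes z e :: real
  assumes "z \<ge> 0"
  shows "sqrt z powr e = z powr (e / 2)"
  using assms by (simp add: powr_half_sqrt[symmetric] powr_powr)

lemma cos_denominator_pos:
  fixes \<rho> x \<alpha> :: real
  assumes "x\<^sup>2 < 1"
  shows "1 + \<rho>\<^sup>2 - 2 * \<rho> * x * cos \<alpha> > 0"
proof -
  have "x\<^sup>2 * (cos \<alpha>)\<^sup>2 \<le> x\<^sup>2"
    using mult_left_mono[OF abs_square_le_1[THEN iffD2, of "cos \<alpha>"], of "x\<^sup>2"] by simp
  moreover have "1 + \<rho>\<^sup>2 - 2 * \<rho> * x * cos \<alpha> = (\<rho> - x * cos \<alpha>)\<^sup>2 + (1 - x\<^sup>2 * (cos \<alpha>)\<^sup>2)"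
    by (simp add: power2_eq_square algebra_simps)
  ultimately show ?thesis
    using assms zero_le_power2[of "\<rho> - x * cos \<alpha>"] by linarith
qed

lemma sin_numerator_le_cos_denominator:
  fixes \<rho> x \<alpha> :: real
  assumes "x\<^sup>2 \<le> 1" and "\<rho> \<ge> 0"
  shows "2 * \<rho> * sin \<alpha> * sqrt (1 - x\<^sup>2) \<le> 1 + \<rho>\<^sup>2 - 2 * \<rho> * x * cos \<alpha>"
proof -
  define r where "r = sqrt (1 - x\<^sup>2)"
  have "(x * cos \<alpha> + r * sin \<alpha>)\<^sup>2 + (x * sin \<alpha> - r * cos \<alpha>)\<^sup>2
      = (x\<^sup>2 + r\<^sup>2) * ((sin \<alpha>)\<^sup>2 + (cos \<alpha>)\<^sup>2)"
    by algebra
  also have "\<dots> = 1"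
    using assms by (simp add: r_def)
  finally have "(x * cos \<alpha> + r * sin \<alpha>)\<^sup>2 \<le> 1"
    by (metis le_add_same_cancel1 zero_le_power2)
  then have "x * cos \<alpha> + r * sin \<alpha> \<le> 1"
    by (simp add: abs_square_le_1)
  then have "2 * \<rho> * (x * cos \<alpha> + r * sin \<alpha>) \<le> 2 * \<rho>"
    using mult_left_mono[of _ 1 "2 * \<rho>"] assms(2) by simp
  moreover have "2 * \<rho> \<le> 1 + \<rho>\<^sup>2"
    using zero_le_power2[of "\<rho> - 1"] by (simp add: power2_eq_square algebra_simps)
  ultimately show ?thesis
    by (simp add: r_def algebra_simps)
qed

theorem lemma2:
  fixes n :: nat and \<rho> \<alpha> x :: real
  assumes "n \<ge> 3" and "0 \<le> \<rho>" and "\<rho> \<le> 1"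
    and "0 \<le> \<alpha>" and "\<alpha> \<le> pi / 2"
    and "-1 < x" and "x < 1"
  shows "(\<integral>\<^sup>+ y \<in> {- sqrt (1 - x\<^sup>2) .. sqrt (1 - x\<^sup>2)}.
            ennreal ((1 - x\<^sup>2 - y\<^sup>2) powr (real n / 2 - 2)
              / (1 - 2 * \<rho> * x * cos \<alpha> - 2 * \<rho> * y * sin \<alpha> + \<rho>\<^sup>2) powr (real n / 2 - 1))
          \<partial>lborel)
       = ennreal (Beta (1/2) (real n / 2 - 1)
            * (1 - x\<^sup>2) powr ((real n - 3) / 2)
            / (1 + \<rho>\<^sup>2 - 2 * \<rho> * x * cos \<alpha>) powr (real n / 2 - 1))
         * hyp2F1 ((real n - 2) / 4) (real n / 4) ((real n - 1) / 2)
             (4 * \<rho>\<^sup>2 * (sin \<alpha>)\<^sup>2 * (1 - x\<^sup>2) / (1 + \<rho>\<^sup>2 - 2 * \<rho> * x * cos \<alpha>)\<^sup>2)"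
proof -
  define r where "r = sqrt (1 - x\<^sup>2)"
  define A where "A = 1 + \<rho>\<^sup>2 - 2 * \<rho> * x * cos \<alpha>"
  define b where "b = 2 * \<rho> * sin \<alpha>"
  have x: "x\<^sup>2 < 1" using assms(6,7) by (simp add: abs_square_less_1)
  have r: "r > 0" "r\<^sup>2 = 1 - x\<^sup>2" using x by (simp_all add: r_def)
  have "sin \<alpha> \<ge> 0" using assms(4,5) by (intro sin_ge_zero) auto
  then have b: "b \<ge> 0" using assms(2) by (simp add: b_def)
  have A: "A > 0" unfolding A_def using x by (rule cos_denominator_pos)
  have bA: "b * r \<le> A"
    using x assms(2) sin_numerator_le_cos_denominator by (simp add: A_def b_def r_def)
  have "real n / 2 - 2 > -1" "real n / 2 - 1 > 0" using assms(1) by auto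
  note main = nn_integral_Icc_powr_div_powr_hyp2F1[OF r(1) this(1) this(2) A b bA]
  have integrand: "1 - x\<^sup>2 - y\<^sup>2 = r\<^sup>2 - y\<^sup>2"
    "1 - 2 * \<rho> * x * cos \<alpha> - 2 * \<rho> * y * sin \<alpha> + \<rho>\<^sup>2 = A - b * y" for y
    by (simp_all add: r A_def b_def)
  have r_powr: "r powr (2 * (real n / 2 - 2) + 1) = (1 - x\<^sup>2) powr ((real n - 3) / 2)"
    unfolding r_def using x by (simp add: sqrt_powr diff_divide_distrib)
  have argument: "(b * r / A)\<^sup>2 = 4 * \<rho>\<^sup>2 * (sin \<alpha>)\<^sup>2 * (1 - x\<^sup>2) / A\<^sup>2"
    by (simp add: b_def r(2) power_divide power_mult_distrib)
  have parameters: "(real n / 2 - 1) / 2 = (real n - 2) / 4" "(real n - 2) / 4 + 1/2 = real n / 4"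
    "real n / 2 - 2 + 3/2 = (real n - 1) / 2" "real n / 2 - 2 + 1 = real n / 2 - 1"
    by (simp_all add: field_simps)
  show ?thesis
    unfolding integrand r_def[symmetric] main unfolding r_powr argument parameters unfolding A_def ..
qed

end
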